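(* Let $\beta\in\mathcal{B}_3$ and write $\rho_3(\beta)=\begin{pmatrix}\mathcal{R}(t)&\mathcal{V}(t)\\\mathcal{S}(t)&\mathcal{U}(t)\end{pmatrix}$. If $\mathcal{S}(t)\equiv0$ (as a Laurent polynomial), then $\beta$ belongs to the subgroup of $\mathcal{B}_3$ generated by $\sigma_1$ and $(\sigma_1\sigma_2)^3$.
   Context: $\mathcal{B}_3$ is the braid group with generators $\sigma_1,\sigma_2$ and relation $\sigma_1\sigma_2\sigma_1=\sigma_2\sigma_1\sigma_2$. The reduced Burau representation $\rho_3:\mathcal{B}_3\to\mathrm{GL}(2,\mathbb{Z}[t,t^{-1}])$ is defined by $\sigma_1\mapsto\begin{pmatrix}-t&1\\0&1\end{pmatrix}$, $\sigma_2\mapsto\begin{pmatrix}1&0\\t&-t\end{pmatrix}$, with $t$ a formal parameter. *)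

theory Defs
  imports Main "HOL-Library.Poly_Mapping"
begin

text \<open>The ring Z[t,t^-1] is the group ring of (int,+) over int, i.e. finitely
supported maps int to int with convolution product.\<close>

type_synonym laurent = "int \<Rightarrow>\<^sub>0 int"

definition lt :: laurent where "lt = Poly_Mapping.single 1 1"
definition lt_inv :: laurent where "lt_inv = Poly_Mapping.single (-1) 1"

text \<open>(a,b,c,d) stands for the matrix with rows (a b) and (c d).\<close>
type_synonym mat2 = "laurent \<times> laurent \<times> laurent \<times> laurent"

fun mat2_mult :: "mat2 \<Rightarrow> mat2 \<Rightarrow> mat2" where
  "mat2_mult (a,b,c,d) (e,f,g,h) = (a*e + b*g, a*f + b*h, c*e + d*g, c*f + d*h)"

definition mat2_id :: mat2 where "mat2_id = (1,0,0,1)"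

fun entry_S :: "mat2 \<Rightarrow> laurent" where
  "entry_S (a,b,c,d) = c"

datatype gen = Sig1 | Sig2

text \<open>A letter (g, True) is sigma_g, (g, False) is its inverse.\<close>
type_synonym letter = "gen \<times> bool"
type_synonym word = "letter list"

fun inv_letter :: "letter \<Rightarrow> letter" where
  "inv_letter (g, e) = (g, \<not> e)"

definition inv_word :: "word \<Rightarrow> word" where
  "inv_word w = rev (map inv_letter w)"

text \<open>Equality in B_3 = <sigma1, sigma2 | sigma1 sigma2 sigma1 = sigma2 sigma1 sigma2>.\<close>
inductive braid_eq :: "word \<Rightarrow> word \<Rightarrow> bool" where
  refl: "braid_eq w w"
| sym: "braid_eq u v \<Longrightarrow> braid_eq v u"
| trans: "braid_eq u v \<Longrightarrow> braid_eq v w \<Longrightarrow> braid_eq u w"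
| cong: "braid_eq u v \<Longrightarrow> braid_eq (x @ u @ y) (x @ v @ y)"
| cancel: "braid_eq [l, inv_letter l] []"
| braid: "braid_eq [(Sig1,True),(Sig2,True),(Sig1,True)] [(Sig2,True),(Sig1,True),(Sig2,True)]"

fun burau_letter :: "letter \<Rightarrow> mat2" where
  "burau_letter (Sig1, True) = (- lt, 1, 0, 1)"
| "burau_letter (Sig1, False) = (- lt_inv, lt_inv, 0, 1)"
| "burau_letter (Sig2, True) = (1, 0, lt, - lt)"
| "burau_letter (Sig2, False) = (1, 0, 1, - lt_inv)"

fun burau :: "word \<Rightarrow> mat2" where
  "burau [] = mat2_id"
| "burau (l # w) = mat2_mult (burau_letter l) (burau w)"

definition sig1_w :: word where "sig1_w = [(Sig1, True)]"

definition delta2_w :: word where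
  "delta2_w = concat (replicate 3 [(Sig1, True), (Sig2, True)])"

definition in_sub_sig1_delta2 :: "word \<Rightarrow> bool" where
  "in_sub_sig1_delta2 w \<longleftrightarrow>
     (\<exists>ws. set ws \<subseteq> {sig1_w, inv_word sig1_w, delta2_w, inv_word delta2_w}
           \<and> braid_eq w (concat ws))"

end

theory Submission
  imports Defs
begin

(* At t = -1 the Burau matrices of sigma1, sigma2 and of the half twist Delta = sigma1 sigma2 sigma1
   become [[1,1],[0,1]], [[1,0],[-1,1]] and [[0,1],[-1,0]] in SL(2,Z), so right multiplication by
   them sends a bottom row (c, d) to (c, c + d), (c - d, d) and (-d, c).  Let H be the subgroup
   generated by sigma1 and Delta^2.  The Euclidean algorithm on (c, d) produces a word coset_rep c d,
   and the braid relation alone shows that right multiplication by a generator maps the coset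
   H coset_rep c d to the coset of the representative of the new bottom row.  By induction on the
   word, every braid lies in H coset_rep c d, where (c, d) is the bottom row of its Burau matrix at
   t = -1.  If S = 0 then c = 0, whose representative is the empty word. *)

notation braid_eq (infix "\<approx>" 50)

abbreviation s1 :: letter where "s1 \<equiv> (Sig1, True)"
abbreviation s1' :: letter where "s1' \<equiv> (Sig1, False)"
abbreviation s2 :: letter where "s2 \<equiv> (Sig2, True)"
abbreviation s2' :: letter where "s2' \<equiv> (Sig2, False)"

declare braid_eq.trans [trans]

lemma braid_eq_append: "a \<approx> b \<Longrightarrow> c \<approx> d \<Longrightarrow> a @ c \<approx> b @ d"
proof -
  assume ab: "a \<approx> b" and cd: "c \<approx> d"
  have "a @ c \<approx> b @ c"
    using braid_eq.cong[OF ab, of "[]" c] by simp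
  also have "\<dots> \<approx> b @ d"
    using braid_eq.cong[OF cd, of b "[]"] by simp
  finally show ?thesis .
qed

lemma braid_eq_append_left: "c \<approx> d \<Longrightarrow> a @ c \<approx> a @ d"
  by (rule braid_eq_append[OF braid_eq.refl])

lemma braid_eq_append_right: "a \<approx> b \<Longrightarrow> a @ c \<approx> b @ c"
  by (rule braid_eq_append[OF _ braid_eq.refl])

lemma inv_letter_inv_letter [simp]: "inv_letter (inv_letter l) = l"
  by (cases l) simp

lemma braid_eq_cancel_left: "[inv_letter l, l] \<approx> []"
  using braid_eq.cancel[of "inv_letter l"] by simp

lemma inv_word_Nil [simp]: "inv_word [] = []"
  by (simp add: inv_word_def)

lemma inv_word_Cons: "inv_word (l # w) = inv_word w @ [inv_letter l]"
  by (simp add: inv_word_def)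

lemma inv_word_concat: "inv_word (concat ws) = concat (rev (map inv_word ws))"
  by (induction ws) (simp_all add: inv_word_def)

lemma append_inv_word_braid_eq: "u @ inv_word u \<approx> []"
proof (induction u)
  case Nil
  show ?case by (simp add: braid_eq.refl)
next
  case (Cons l u)
  have "(l # u) @ inv_word (l # u) = [l] @ (u @ inv_word u) @ [inv_letter l]"
    by (simp add: inv_word_Cons)
  also have "\<dots> \<approx> [l] @ [] @ [inv_letter l]"
    using Cons.IH by (rule braid_eq.cong)
  also have "\<dots> \<approx> []"
    using braid_eq.cancel by simp
  finally show ?case .
qed

lemma inv_word_append_braid_eq: "inv_word u @ u \<approx> []"
  using append_inv_word_braid_eq[of "inv_word u"] by (simp add: inv_word_def rev_map comp_def)

lemma commute_inv_letter:
  assumes "[l] @ z \<approx> z @ [l]"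
  shows "[inv_letter l] @ z \<approx> z @ [inv_letter l]"
proof -
  have "[inv_letter l] @ z \<approx> [inv_letter l] @ z @ [l, inv_letter l]"
    using braid_eq.sym[OF braid_eq_append_left[OF braid_eq.cancel[of l], of "[inv_letter l] @ z"]]
    by simp
  also have "\<dots> = [inv_letter l] @ (z @ [l]) @ [inv_letter l]"
    by simp
  also have "\<dots> \<approx> [inv_letter l] @ ([l] @ z) @ [inv_letter l]"
    using braid_eq.sym[OF assms] by (rule braid_eq.cong)
  also have "\<dots> = [inv_letter l, l] @ z @ [inv_letter l]"
    by simp
  also have "\<dots> \<approx> z @ [inv_letter l]"
    using braid_eq_append_right[OF braid_eq_cancel_left] by simp
  finally show ?thesis .
qed

definition sub_gens :: "word set" where
  "sub_gens = {sig1_w, inv_word sig1_w, delta2_w, inv_word delta2_w}"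

definition coset_eq :: "word \<Rightarrow> word \<Rightarrow> bool" (infix "\<sim>" 50) where
  "a \<sim> b \<longleftrightarrow> (\<exists>ws. set ws \<subseteq> sub_gens \<and> a \<approx> concat ws @ b)"

lemma in_sub_sig1_delta2_iff_coset_eq_Nil: "in_sub_sig1_delta2 w \<longleftrightarrow> w \<sim> []"
  by (simp add: in_sub_sig1_delta2_def coset_eq_def sub_gens_def)

lemma braid_eq_imp_coset_eq: "a \<approx> b \<Longrightarrow> a \<sim> b"
  unfolding coset_eq_def by (rule exI[of _ "[]"]) simp

lemma coset_eq_refl [simp]: "a \<sim> a"
  by (rule braid_eq_imp_coset_eq[OF braid_eq.refl])

lemma coset_eq_trans [trans]: "a \<sim> b \<Longrightarrow> b \<sim> c \<Longrightarrow> a \<sim> c"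
proof -
  assume "a \<sim> b" "b \<sim> c"
  then obtain us vs where us: "set us \<subseteq> sub_gens" "a \<approx> concat us @ b"
    and vs: "set vs \<subseteq> sub_gens" "b \<approx> concat vs @ c"
    unfolding coset_eq_def by blast
  have "a \<approx> concat us @ concat vs @ c"
    using us(2) braid_eq_append_left[OF vs(2)] by (rule braid_eq.trans)
  then show ?thesis
    unfolding coset_eq_def using us(1) vs(1) by (intro exI[of _ "us @ vs"]) auto
qed

lemma braid_eq_coset_eq_trans [trans]: "a \<approx> b \<Longrightarrow> b \<sim> c \<Longrightarrow> a \<sim> c"
  by (rule coset_eq_trans[OF braid_eq_imp_coset_eq])

lemma coset_eq_braid_eq_trans [trans]: "a \<sim> b \<Longrightarrow> b \<approx> c \<Longrightarrow> a \<sim> c"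
  by (erule coset_eq_trans[OF _ braid_eq_imp_coset_eq])

lemma coset_eq_sym: "a \<sim> b \<Longrightarrow> b \<sim> a"
proof -
  assume "a \<sim> b"
  then obtain ws where ws: "set ws \<subseteq> sub_gens" "a \<approx> concat ws @ b"
    unfolding coset_eq_def by blast
  let ?h = "concat ws"
  have "b \<approx> (inv_word ?h @ ?h) @ b"
    using braid_eq.sym[OF braid_eq_append_right[OF inv_word_append_braid_eq, of ?h b]] by simp
  also have "\<dots> \<approx> inv_word ?h @ a"
    using braid_eq_append_left[OF braid_eq.sym[OF ws(2)]] by simp
  finally have "b \<approx> concat (rev (map inv_word ws)) @ a"
    by (simp add: inv_word_concat)
  moreover have "set (rev (map inv_word ws)) \<subseteq> sub_gens"
    using ws(1) by (auto simp: sub_gens_def inv_word_def rev_map comp_def)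
  ultimately show ?thesis
    unfolding coset_eq_def by blast
qed

lemma coset_eq_append: "a \<sim> b \<Longrightarrow> a @ u \<sim> b @ u"
proof -
  assume "a \<sim> b"
  then obtain ws where "set ws \<subseteq> sub_gens" "a \<approx> concat ws @ b"
    unfolding coset_eq_def by blast
  then show ?thesis
    unfolding coset_eq_def using braid_eq_append_right[of a "concat ws @ b" u] by auto
qed

lemma sub_gen_coset_eq: "g \<in> sub_gens \<Longrightarrow> g @ w \<sim> w"
  unfolding coset_eq_def by (rule exI[of _ "[g]"]) (simp add: braid_eq.refl)

definition delta_w :: word where
  "delta_w = [s1, s2, s1]"

lemma sig1_delta: "[s1] @ delta_w \<approx> delta_w @ [s2]"
  using braid_eq.cong[OF braid_eq.braid, of "[s1]" "[]"] by (simp add: delta_w_def)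

lemma sig2_delta: "[s2] @ delta_w \<approx> delta_w @ [s1]"
  using braid_eq.cong[OF braid_eq.sym[OF braid_eq.braid], of "[]" "[s1]"] by (simp add: delta_w_def)

lemma delta_sq: "delta_w @ delta_w \<approx> delta2_w"
  using braid_eq.cong[OF braid_eq.braid, of "[s1, s2, s1]" "[]"]
  by (simp add: delta_w_def delta2_w_def numeral_3_eq_3)

lemma letter_commute_delta_sq: "[l] @ delta_w @ delta_w \<approx> delta_w @ delta_w @ [l]"
proof -
  have swap: "[a] @ delta_w @ delta_w \<approx> delta_w @ delta_w @ [a]"
    if ab: "[a] @ delta_w \<approx> delta_w @ [b]" and ba: "[b] @ delta_w \<approx> delta_w @ [a]" for a b
  proof -
    have "[a] @ delta_w @ delta_w \<approx> (delta_w @ [b]) @ delta_w"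
      using braid_eq_append_right[OF ab] by simp
    also have "\<dots> \<approx> delta_w @ delta_w @ [a]"
      using braid_eq_append_left[OF ba] by simp
    finally show ?thesis .
  qed
  have "[s1] @ delta_w @ delta_w \<approx> delta_w @ delta_w @ [s1]"
    using sig1_delta sig2_delta by (rule swap)
  moreover have "[s2] @ delta_w @ delta_w \<approx> delta_w @ delta_w @ [s2]"
    using sig2_delta sig1_delta by (rule swap)
  ultimately show ?thesis
    using commute_inv_letter[of s1 "delta_w @ delta_w"] commute_inv_letter[of s2 "delta_w @ delta_w"]
    by (cases l rule: burau_letter.cases) simp_all
qed

lemma word_commute_delta_sq: "w @ delta_w @ delta_w \<approx> delta_w @ delta_w @ w"
proof (induction w)
  case Nil
  show ?case by (simp add: braid_eq.refl)
next
  case (Cons l w)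
  have "(l # w) @ delta_w @ delta_w \<approx> [l] @ delta_w @ delta_w @ w"
    using braid_eq_append_left[OF Cons.IH, of "[l]"] by simp
  also have "\<dots> \<approx> delta_w @ delta_w @ (l # w)"
    using braid_eq_append_right[OF letter_commute_delta_sq, of l w] by simp
  finally show ?case .
qed

lemma sig1_delta_sig1: "[s1] @ delta_w @ [s1] \<approx> delta_w @ [s1'] @ delta_w"
proof -
  have "[s1] @ delta_w @ [s1] \<approx> [s1, s2, s1, s2, s1]"
    using braid_eq.cong[OF braid_eq.braid, of "[s1]" "[s1]"] by (simp add: delta_w_def)
  also have "\<dots> \<approx> delta_w @ [s1'] @ delta_w"
    using braid_eq.cong[OF braid_eq.sym[OF braid_eq.cancel[of s1]], of "[s1, s2]" "[s1, s2, s1]"]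
    by (simp add: delta_w_def)
  finally show ?thesis .
qed

lemma sig2_eq: "[s2] \<approx> [s1'] @ delta_w @ [s1']"
proof -
  have "[s1'] @ delta_w @ [s1'] \<approx> [s2] @ [s1, s1']"
    using braid_eq_append_right[OF braid_eq_cancel_left[of s1], of "[s2, s1, s1']"]
    by (simp add: delta_w_def)
  also have "\<dots> \<approx> [s2]"
    using braid_eq_append_left[OF braid_eq.cancel[of s1], of "[s2]"] by simp
  finally show ?thesis
    by (rule braid_eq.sym)
qed

lemma delta_sq_coset_eq: "delta_w @ delta_w @ w \<sim> w"
proof -
  have "delta_w @ delta_w @ w \<approx> delta2_w @ w"
    using braid_eq_append_right[OF delta_sq] by simp
  also have "delta2_w @ w \<sim> w"
    by (rule sub_gen_coset_eq) (simp add: sub_gens_def)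
  finally show ?thesis .
qed

lemma append_delta_sq_coset_eq: "w @ delta_w @ delta_w \<sim> w"
  using word_commute_delta_sq delta_sq_coset_eq by (rule braid_eq_coset_eq_trans)

lemma delta_sig1_delta: "delta_w @ [s1] @ delta_w \<sim> delta_w @ [s1']"
proof -
  have "delta_w @ [s1] @ delta_w \<approx> delta_w @ delta_w @ [s2]"
    using braid_eq_append_left[OF sig1_delta] by simp
  also have "\<dots> \<sim> [s2]"
    by (rule delta_sq_coset_eq)
  also have "\<dots> \<approx> [s1'] @ delta_w @ [s1']"
    by (rule sig2_eq)
  also have "\<dots> \<sim> delta_w @ [s1']"
    by (rule sub_gen_coset_eq) (simp add: sub_gens_def sig1_w_def inv_word_def)
  finally show ?thesis .
qed

lemma delta_sig1_inv_delta: "delta_w @ [s1'] @ delta_w \<sim> delta_w @ [s1]"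
proof -
  have "delta_w @ [s1'] @ delta_w \<approx> [s1] @ delta_w @ [s1]"
    by (rule braid_eq.sym[OF sig1_delta_sig1])
  also have "\<dots> \<sim> delta_w @ [s1]"
    by (rule sub_gen_coset_eq) (simp add: sub_gens_def sig1_w_def)
  finally show ?thesis .
qed

lemma coset_eq_append_inv_letter: "a @ [l] \<sim> b \<Longrightarrow> b @ [inv_letter l] \<sim> a"
proof -
  assume "a @ [l] \<sim> b"
  then have "b @ [inv_letter l] \<sim> a @ [l, inv_letter l]"
    using coset_eq_append[OF coset_eq_sym, of "a @ [l]" b "[inv_letter l]"] by simp
  also have "\<dots> \<approx> a"
    using braid_eq_append_left[OF braid_eq.cancel[of l], of a] by simp
  finally show ?thesis .
qed

subsection \<open>Coset representatives by the Euclidean algorithm\<close>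

(* For coprime c, d the matrix of coset_rep c d at t = -1 has bottom row (c, d) up to sign. *)
function coset_rep :: "int \<Rightarrow> int \<Rightarrow> word" where
  "coset_rep c d =
    (if c = 0 then []
     else if c < 0 then coset_rep (-c) (-d)
     else if \<bar>d\<bar> < c then coset_rep d (-c) @ delta_w
     else if 0 < d then coset_rep c (d - c) @ [s1]
     else coset_rep c (d + c) @ [s1'])"
  by auto
termination
  by (relation "measures [\<lambda>(c, d). nat \<bar>c\<bar>, \<lambda>(c, d). nat \<bar>d\<bar>, \<lambda>(c, d). if c < 0 then 1 else 0]")
    auto

declare coset_rep.simps [simp del]

lemma coset_rep_zero [simp]: "coset_rep 0 d = []"
  by (simp add: coset_rep.simps)

lemma coset_rep_neg: "c < 0 \<Longrightarrow> coset_rep c d = coset_rep (-c) (-d)"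
  by (subst coset_rep.simps) simp

lemma coset_rep_uminus [simp]: "coset_rep (-c) (-d) = coset_rep c d"
  by (cases c "0::int" rule: linorder_cases) (simp_all add: coset_rep_neg)

lemma coset_rep_delta_step: "\<bar>d\<bar> < c \<Longrightarrow> coset_rep c d = coset_rep d (-c) @ delta_w"
  by (subst coset_rep.simps) auto

lemma coset_rep_sig1_step: "0 < c \<Longrightarrow> c \<le> d \<Longrightarrow> coset_rep c d = coset_rep c (d - c) @ [s1]"
  by (subst coset_rep.simps) simp

lemma coset_rep_sig1_inv_step:
  "0 < c \<Longrightarrow> d \<le> -c \<Longrightarrow> coset_rep c d = coset_rep c (d + c) @ [s1']"
  by (subst coset_rep.simps) simp

lemma coset_rep_row_zero: "c \<noteq> 0 \<Longrightarrow> coset_rep c 0 = delta_w"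
  using coset_rep_delta_step[of 0 "\<bar>c\<bar>"] coset_rep_neg[of c 0] by (cases "c < 0") simp_all

lemma coset_rep_diag: "0 < c \<Longrightarrow> coset_rep c c = delta_w @ [s1]"
  using coset_rep_sig1_step[of c c] coset_rep_row_zero[of c] by simp

lemma coset_rep_antidiag: "0 < c \<Longrightarrow> coset_rep c (-c) = delta_w @ [s1']"
  using coset_rep_sig1_inv_step[of c "-c"] coset_rep_row_zero[of c] by simp

lemma coset_rep_append_delta_pos:
  assumes "0 < c"
  shows "coset_rep c d @ delta_w \<sim> coset_rep (-d) c"
proof -
  consider "\<bar>d\<bar> < c" | "c < d" | "d = c" | "d < -c" | "d = -c"
    by linarith
  then show ?thesis
  proof cases
    case 1
    then have "coset_rep c d @ delta_w = coset_rep (-d) c @ delta_w @ delta_w"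
      using coset_rep_delta_step coset_rep_uminus[of d "-c"] by simp
    then show ?thesis
      using append_delta_sq_coset_eq by simp
  next
    case 2
    then have "coset_rep (-d) c = coset_rep c d @ delta_w"
      using coset_rep_delta_step[of "-c" d] coset_rep_uminus[of d "-c"] assms by simp
    then show ?thesis
      by simp
  next
    case 3
    then show ?thesis
      using delta_sig1_delta coset_rep_diag[OF assms] coset_rep_antidiag[OF assms]
        coset_rep_uminus[of c "-c"] by simp
  next
    case 4
    then have "coset_rep (-d) c = coset_rep c d @ delta_w"
      using coset_rep_delta_step[of c "-d"] assms by simp
    then show ?thesis
      by simp
  next
    case 5
    then show ?thesis
      using delta_sig1_inv_delta coset_rep_diag[OF assms] coset_rep_antidiag[OF assms] by simp
  qed
qed

lemma coset_rep_append_delta: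
  assumes "(c, d) \<noteq> (0, 0)"
  shows "coset_rep c d @ delta_w \<sim> coset_rep (-d) c"
proof (cases c "0::int" rule: linorder_cases)
  case less
  then show ?thesis
    using coset_rep_append_delta_pos[of "-c" "-d"] coset_rep_uminus[of d "-c"] by simp
next
  case equal
  then show ?thesis
    using assms coset_rep_row_zero[of "-d"] by simp
next
  case greater
  then show ?thesis
    by (rule coset_rep_append_delta_pos)
qed

lemma coset_rep_append_sig1_pos:
  assumes "0 < c"
  shows "coset_rep c d @ [s1] \<sim> coset_rep c (c + d)"
proof -
  consider "0 \<le> d" | "d \<le> -c" | "-c < d" "d < 0"
    by linarith
  then show ?thesis
  proof cases
    case 1
    then show ?thesis
      using coset_rep_sig1_step[OF assms, of "c + d"] by simp
  next
    case 2
    then have "coset_rep c d @ [s1] = coset_rep c (c + d) @ [s1', s1]"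
      using coset_rep_sig1_inv_step[OF assms] by (simp add: add.commute)
    also have "\<dots> \<approx> coset_rep c (c + d)"
      using braid_eq_append_left[OF braid_eq_cancel_left[of s1]] by simp
    finally show ?thesis
      by (rule braid_eq_imp_coset_eq)
  next
    case 3
    have "coset_rep c d = coset_rep (-d) (c + d) @ [s1] @ delta_w"
      using 3 coset_rep_delta_step[of d c] coset_rep_uminus[of d "-c"]
        coset_rep_sig1_step[of "-d" c] by simp
    then have "coset_rep c d @ [s1] = coset_rep (-d) (c + d) @ [s1] @ delta_w @ [s1]"
      by simp
    also have "\<dots> \<approx> (coset_rep (-d) (c + d) @ delta_w) @ [s1'] @ delta_w"
      using braid_eq_append_left[OF sig1_delta_sig1] by simp
    also have "\<dots> \<sim> coset_rep (c + d) d @ [s1'] @ delta_w"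
      using coset_eq_append[OF coset_rep_append_delta[of "-d" "c + d"]] 3
        coset_rep_uminus[of "c + d" d] by simp
    also have "\<dots> = coset_rep c (c + d)"
      using 3 coset_rep_delta_step[of "c + d" c] coset_rep_sig1_inv_step[of "c + d" "-c"] by simp
    finally show ?thesis .
  qed
qed

lemma coset_rep_append_sig1: "coset_rep c d @ [s1] \<sim> coset_rep c (c + d)"
proof (cases c "0::int" rule: linorder_cases)
  case less
  then show ?thesis
    using coset_rep_append_sig1_pos[of "-c" "-d"] coset_rep_uminus[of c "c + d"] by simp
next
  case equal
  then show ?thesis
    using sub_gen_coset_eq[of sig1_w "[]"] by (simp add: sub_gens_def sig1_w_def)
next
  case greater
  then show ?thesis
    by (rule coset_rep_append_sig1_pos)
qed

lemma coset_rep_append_sig1_inv: "coset_rep c d @ [s1'] \<sim> coset_rep c (d - c)"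
  using coset_eq_append_inv_letter[OF coset_rep_append_sig1[of c "d - c"]] by simp

lemma coset_rep_append_sig2:
  assumes "(c, d) \<noteq> (0, 0)"
  shows "coset_rep c d @ [s2] \<sim> coset_rep (c - d) d"
proof -
  have "coset_rep c d @ [s2] \<approx> (coset_rep c d @ [s1']) @ delta_w @ [s1']"
    using braid_eq_append_left[OF sig2_eq] by simp
  also have "\<dots> \<sim> (coset_rep c (d - c) @ delta_w) @ [s1']"
    using coset_eq_append[OF coset_rep_append_sig1_inv] by simp
  also have "\<dots> \<sim> coset_rep (c - d) c @ [s1']"
    using coset_eq_append[OF coset_rep_append_delta[of c "d - c"], of "[s1']"] assms by auto
  also have "\<dots> \<sim> coset_rep (c - d) d"
    using coset_rep_append_sig1_inv[of "c - d" c] by simp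
  finally show ?thesis .
qed

lemma coset_rep_append_sig2_inv:
  assumes "(c, d) \<noteq> (0, 0)"
  shows "coset_rep c d @ [s2'] \<sim> coset_rep (c + d) d"
  using coset_eq_append_inv_letter[OF coset_rep_append_sig2[of "c + d" d]] assms by auto

subsection \<open>Specialisation at t = -1\<close>

definition alt_sign :: "int \<Rightarrow> int" where
  "alt_sign k = (if even k then 1 else -1)"

definition eval_neg1 :: "laurent \<Rightarrow> int" where
  "eval_neg1 p = (\<Sum>k\<in>Poly_Mapping.keys p. Poly_Mapping.lookup p k * alt_sign k)"

lemma alt_sign_add: "alt_sign (k + l) = alt_sign k * alt_sign l"
  by (simp add: alt_sign_def)

lemma eval_neg1_add [simp]: "eval_neg1 (p + q) = eval_neg1 p + eval_neg1 q"
  unfolding eval_neg1_def by (rule setsum_keys_plus_distrib) (simp_all add: algebra_simps)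

lemma eval_neg1_uminus [simp]: "eval_neg1 (- p) = - eval_neg1 p"
  by (simp add: eval_neg1_def sum_negf)

lemma eval_neg1_diff [simp]: "eval_neg1 (p - q) = eval_neg1 p - eval_neg1 q"
  using eval_neg1_add[of p "- q"] by simp

lemma eval_neg1_single [simp]: "eval_neg1 (Poly_Mapping.single k a) = a * alt_sign k"
  by (simp add: eval_neg1_def)

lemma eval_neg1_zero [simp]: "eval_neg1 0 = 0"
  by (simp add: eval_neg1_def)

lemma eval_neg1_one [simp]: "eval_neg1 1 = 1"
  using eval_neg1_single[of 0 1] by (simp add: alt_sign_def)

lemma eval_neg1_single_mult: "eval_neg1 (Poly_Mapping.single k 1 * q) = alt_sign k * eval_neg1 q"
proof -
  have "Poly_Mapping.keys q \<subseteq> UNIV"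
    by simp
  then show ?thesis
  proof (induction q rule: frag_induction)
    case zero
    show ?case by simp
  next
    case (one l)
    show ?case by (simp add: mult_single alt_sign_add)
  next
    case (diff a b)
    then show ?case by (simp add: right_diff_distrib)
  qed
qed

lemma eval_neg1_mult [simp]: "eval_neg1 (p * q) = eval_neg1 p * eval_neg1 q"
proof -
  have "Poly_Mapping.keys p \<subseteq> UNIV"
    by simp
  then show ?thesis
  proof (induction p rule: frag_induction)
    case zero
    show ?case by simp
  next
    case (one k)
    show ?case by (simp add: eval_neg1_single_mult)
  next
    case (diff a b)
    then show ?case by (simp add: left_diff_distrib)
  qed
qed

lemma eval_neg1_lt [simp]: "eval_neg1 lt = -1"
  by (simp add: lt_def alt_sign_def)

lemma eval_neg1_lt_inv [simp]: "eval_neg1 lt_inv = -1"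
  by (simp add: lt_inv_def alt_sign_def)

type_synonym int_mat2 = "int \<times> int \<times> int \<times> int"

fun int_mat2_mult :: "int_mat2 \<Rightarrow> int_mat2 \<Rightarrow> int_mat2" where
  "int_mat2_mult (a, b, c, d) (e, f, g, h) = (a*e + b*g, a*f + b*h, c*e + d*g, c*f + d*h)"

fun int_mat2_det :: "int_mat2 \<Rightarrow> int" where
  "int_mat2_det (a, b, c, d) = a*d - b*c"

fun eval_neg1_mat :: "mat2 \<Rightarrow> int_mat2" where
  "eval_neg1_mat (a, b, c, d) = (eval_neg1 a, eval_neg1 b, eval_neg1 c, eval_neg1 d)"

lemma eval_neg1_mat_mult:
  "eval_neg1_mat (mat2_mult A B) = int_mat2_mult (eval_neg1_mat A) (eval_neg1_mat B)"
  by (cases A; cases B) simp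

lemma int_mat2_mult_assoc:
  "int_mat2_mult (int_mat2_mult A B) C = int_mat2_mult A (int_mat2_mult B C)"
  by (cases A; cases B; cases C) (simp add: algebra_simps)

lemma int_mat2_mult_one_left [simp]: "int_mat2_mult (1, 0, 0, 1) A = A"
  by (cases A) simp

lemma int_mat2_mult_one_right [simp]: "int_mat2_mult A (1, 0, 0, 1) = A"
  by (cases A) simp

lemma int_mat2_det_mult: "int_mat2_det (int_mat2_mult A B) = int_mat2_det A * int_mat2_det B"
  by (cases A; cases B) (simp add: algebra_simps)

definition burau_neg1 :: "word \<Rightarrow> int_mat2" where
  "burau_neg1 w = eval_neg1_mat (burau w)"

lemma burau_neg1_Nil: "burau_neg1 [] = (1, 0, 0, 1)"
  by (simp add: burau_neg1_def mat2_id_def)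

lemma burau_neg1_Cons:
  "burau_neg1 (l # w) = int_mat2_mult (eval_neg1_mat (burau_letter l)) (burau_neg1 w)"
  by (simp add: burau_neg1_def eval_neg1_mat_mult)

lemma burau_neg1_snoc:
  "burau_neg1 (w @ [l]) = int_mat2_mult (burau_neg1 w) (eval_neg1_mat (burau_letter l))"
  by (induction w) (simp_all add: burau_neg1_Nil burau_neg1_Cons int_mat2_mult_assoc)

lemma det_burau_neg1: "int_mat2_det (burau_neg1 w) = 1"
proof (induction w)
  case Nil
  show ?case by (simp add: burau_neg1_Nil)
next
  case (Cons l w)
  have "int_mat2_det (eval_neg1_mat (burau_letter l)) = 1"
    by (cases l rule: burau_letter.cases) simp_all
  with Cons.IH show ?case
    by (simp add: burau_neg1_Cons int_mat2_det_mult)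
qed

subsection \<open>The coset of a braid is determined by its bottom row at t = -1\<close>

lemma coset_rep_append_letter:
  assumes "(c, d) \<noteq> (0, 0)"
    and "int_mat2_mult (a, b, c, d) (eval_neg1_mat (burau_letter l)) = (a', b', c', d')"
  shows "coset_rep c d @ [l] \<sim> coset_rep c' d'"
proof (cases l rule: burau_letter.cases)
  case 1
  with assms(2) have "c' = c" "d' = c + d"
    by auto
  with 1 show ?thesis
    using coset_rep_append_sig1 by simp
next
  case 2
  with assms(2) have "c' = c" "d' = d - c"
    by auto
  with 2 show ?thesis
    using coset_rep_append_sig1_inv by simp
next
  case 3
  with assms(2) have "c' = c - d" "d' = d"
    by auto
  with 3 show ?thesis
    using coset_rep_append_sig2[OF assms(1)] by simp
next
  case 4
  with assms(2) have "c' = c + d" "d' = d"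
    by auto
  with 4 show ?thesis
    using coset_rep_append_sig2_inv[OF assms(1)] by simp
qed

lemma coset_eq_coset_rep_burau_neg1: "burau_neg1 w = (a, b, c, d) \<Longrightarrow> w \<sim> coset_rep c d"
proof (induction w arbitrary: a b c d rule: rev_induct)
  case Nil
  then show ?case
    by (simp add: burau_neg1_Nil)
next
  case (snoc l w)
  obtain a0 b0 c0 d0 where w: "burau_neg1 w = (a0, b0, c0, d0)"
    by (cases "burau_neg1 w")
  have "(c0, d0) \<noteq> (0, 0)"
    using det_burau_neg1[of w] w by auto
  moreover have "int_mat2_mult (a0, b0, c0, d0) (eval_neg1_mat (burau_letter l)) = (a, b, c, d)"
    using snoc.prems w by (simp add: burau_neg1_snoc)
  ultimately have "coset_rep c0 d0 @ [l] \<sim> coset_rep c d"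
    by (rule coset_rep_append_letter)
  with coset_eq_append[OF snoc.IH[OF w]] show ?case
    by (rule coset_eq_trans)
qed

theorem lemma1:
  fixes \<beta> :: word
  assumes "entry_S (burau \<beta>) = 0"
  shows "in_sub_sig1_delta2 \<beta>"
proof -
  obtain a b c d where "burau \<beta> = (a, b, c, d)"
    by (cases "burau \<beta>")
  with assms have "burau_neg1 \<beta> = (eval_neg1 a, eval_neg1 b, 0, eval_neg1 d)"
    by (simp add: burau_neg1_def)
  then have "\<beta> \<sim> coset_rep 0 (eval_neg1 d)"
    by (rule coset_eq_coset_rep_burau_neg1)
  then show ?thesis
    by (simp add: in_sub_sig1_delta2_iff_coset_eq_Nil)
qed

end
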